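(* Every real matrix that satisfies the dominance condition has full row rank, and each of its columns contains exactly one entry equal to $1$.
   Context: A matrix $C_1$ covers $C_2$ if $C_1-C_2$ is entrywise nonnegative. A matrix is columnwise normal if its entries lie in $[0,1]$ and every column has at least one entry equal to $1$. A columnwise normal matrix with $n$ rows satisfies the dominance condition if (a) there is an $n\times n$ submatrix (formed by $n$ of its columns) covering a permutation matrix, and (b) for every $n\times n$ such submatrix covering a permutation matrix, the sum of each row is less than $2$. *)

theory Defs
  imports "HOL-Analysis.Analysis"
begin

text \<open>Matrices are A :: real^'c^'r : rows indexed by 'r, columns by 'c; entry A$i$j.\<close>

definition covers :: "real^'c^'r \<Rightarrow> real^'c^'r \<Rightarrow> bool" where
  "covers C1 C2 \<longleftrightarrow> (\<forall>i j. C1$i$j - C2$i$j \<ge> 0)"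

definition perm_matrix :: "('n \<Rightarrow> 'n) \<Rightarrow> real^'n^'n" where
  "perm_matrix p = (\<chi> i j. if p i = j then 1 else 0)"

definition is_permutation_matrix :: "real^'n^'n \<Rightarrow> bool" where
  "is_permutation_matrix P \<longleftrightarrow> (\<exists>p. p permutes (UNIV::'n set) \<and> P = perm_matrix p)"

definition columnwise_normal :: "real^'c^'r \<Rightarrow> bool" where
  "columnwise_normal A \<longleftrightarrow>
     (\<forall>i j. 0 \<le> A$i$j \<and> A$i$j \<le> 1) \<and> (\<forall>j. \<exists>i. A$i$j = 1)"

definition col_submatrix :: "real^'c^'r \<Rightarrow> ('r \<Rightarrow> 'c) \<Rightarrow> real^'r^'r" where
  "col_submatrix A f = (\<chi> i j. A$i$(f j))"

definition dominance_condition :: "real^'c^'r \<Rightarrow> bool" where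
  "dominance_condition A \<longleftrightarrow>
     columnwise_normal A \<and>
     (\<exists>f. inj f \<and> (\<exists>P. is_permutation_matrix P \<and> covers (col_submatrix A f) P)) \<and>
     (\<forall>f. inj f \<and> (\<exists>P. is_permutation_matrix P \<and> covers (col_submatrix A f) P) \<longrightarrow>
          (\<forall>i. (\<Sum>j\<in>UNIV. col_submatrix A f $ i $ j) < 2))"

end

theory Submission
  imports Defs
begin

text \<open>
  Composing the column selection of the dominance condition with the permutation it covers gives
  an injective choice of columns \<open>g\<close> with \<open>A$i$(g i) = 1\<close> for every row \<open>i\<close>. The square
  submatrix formed by these columns has unit diagonal and, by the row-sum bound, off-diagonal row
  sums below \<open>1\<close>; it is therefore strictly diagonally dominant, hence nonsingular, and \<open>A\<close> has
  full row rank. If some column \<open>c\<close> had two entries \<open>1\<close>, rerouting the choice through \<open>c\<close> would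
  give a covering submatrix with a row containing two entries \<open>1\<close>, i.e. a row sum \<open>\<ge> 2\<close>.
\<close>

lemma strictly_diagonally_dominant_full_rank:
  fixes B :: "real^'n^'n"
  assumes dominant: "\<And>i. (\<Sum>j\<in>UNIV-{i}. \<bar>B$i$j\<bar>) < \<bar>B$i$i\<bar>"
  shows "rank B = CARD('n)"
proof -
  have "z = 0" if "B *v z = 0" for z
  proof -
    obtain i where i: "Max (range (\<lambda>j. \<bar>z$j\<bar>)) = \<bar>z$i\<bar>"
      using obtains_MAX[of UNIV "\<lambda>j. \<bar>z$j\<bar>"] by auto
    have i_max: "\<bar>z$j\<bar> \<le> \<bar>z$i\<bar>" for j
      unfolding i[symmetric] by (rule Max_ge) auto
    have "0 = (B *v z)$i"
      using that by simp
    also have "\<dots> = B$i$i * z$i + (\<Sum>j\<in>UNIV-{i}. B$i$j * z$j)"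
      by (simp add: matrix_vector_mult_def sum.remove[of UNIV i])
    finally have "B$i$i * z$i = - (\<Sum>j\<in>UNIV-{i}. B$i$j * z$j)"
      by linarith
    then have "\<bar>B$i$i\<bar> * \<bar>z$i\<bar> = \<bar>\<Sum>j\<in>UNIV-{i}. B$i$j * z$j\<bar>"
      by (simp flip: abs_mult)
    also have "\<dots> \<le> (\<Sum>j\<in>UNIV-{i}. \<bar>B$i$j\<bar> * \<bar>z$i\<bar>)"
      using i_max by (intro sum_abs[THEN order_trans] sum_mono) (simp add: abs_mult mult_left_mono)
    also have "\<dots> = (\<Sum>j\<in>UNIV-{i}. \<bar>B$i$j\<bar>) * \<bar>z$i\<bar>"
      by (simp add: sum_distrib_right)
    finally have "\<bar>z$i\<bar> = 0"
      using dominant[of i] mult_strict_right_mono[of _ _ "\<bar>z$i\<bar>"] by fastforce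
    then show "z = 0"
      using i_max by (simp add: vec_eq_iff)
  qed
  then show ?thesis
    using matrix_nonfull_linear_equations_eq by blast
qed

lemma col_submatrix_eq_matrix_mult:
  "col_submatrix A f = A ** (\<chi> c j. if c = f j then 1 else 0)"
  by (simp add: col_submatrix_def matrix_matrix_mult_def vec_eq_iff if_distrib if_distribR
      cong: if_cong)

lemma rank_col_submatrix_le: "rank (col_submatrix A f) \<le> rank A"
  unfolding col_submatrix_eq_matrix_mult by (rule rank_mul_le_left)

lemma covers_perm_matrix_entry_eq_1:
  assumes "columnwise_normal A" and "covers (col_submatrix A f) (perm_matrix p)"
  shows "A$i$(f (p i)) = 1"
proof -
  have "col_submatrix A f $i$(p i) - perm_matrix p $i$(p i) \<ge> 0"
    using assms(2) unfolding covers_def by blast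
  then have "A$i$(f (p i)) \<ge> 1"
    by (simp add: col_submatrix_def perm_matrix_def)
  moreover have "A$i$(f (p i)) \<le> 1"
    using assms(1) unfolding columnwise_normal_def by blast
  ultimately show ?thesis by simp
qed

lemma dominance_condition_obtains_unit_selection:
  fixes A :: "real^'c^'r"
  assumes "dominance_condition A"
  obtains g where "inj g" and "\<And>i. A$i$(g i) = 1"
proof -
  obtain f p where "inj f" "p permutes (UNIV::'r set)"
    and "covers (col_submatrix A f) (perm_matrix p)" and "columnwise_normal A"
    using assms unfolding dominance_condition_def is_permutation_matrix_def by blast
  moreover have "inj (f \<circ> p)"
    using \<open>inj f\<close> \<open>p permutes UNIV\<close> by (simp add: inj_compose permutes_inj)
  ultimately show thesis
    using that[of "f \<circ> p"] covers_perm_matrix_entry_eq_1[of A f p] by simp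
qed

lemma dominance_condition_row_sum_less_2:
  fixes A :: "real^'c^'r"
  assumes "dominance_condition A" and "inj g" and "\<And>i. A$i$(g i) = 1"
  shows "(\<Sum>j\<in>UNIV. A$i$(g j)) < 2"
proof -
  have "covers (col_submatrix A g) (perm_matrix id)"
    using assms unfolding dominance_condition_def columnwise_normal_def covers_def
      col_submatrix_def perm_matrix_def by auto
  moreover have "is_permutation_matrix (perm_matrix (id :: 'r \<Rightarrow> 'r))"
    unfolding is_permutation_matrix_def using permutes_id by blast
  ultimately show ?thesis
    using assms(1,2) unfolding dominance_condition_def col_submatrix_def by fastforce
qed

lemma unit_selection_through_column:
  fixes A :: "real^'c^'r"
  assumes "inj g" and "\<And>i. A$i$(g i) = 1" and "A$r$c = 1"
  obtains h k where "inj h" and "\<And>i. A$i$(h i) = 1" and "h k = c"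
proof (cases "c \<in> range g")
  case True
  then show thesis
    using that assms(1,2) by blast
next
  case False
  have "inj (g(r := c))"
    using assms(1) False unfolding inj_on_def by auto
  then show thesis
    using that[of "g(r := c)" r] assms(2,3) by simp
qed

lemma dominance_condition_unique_one:
  fixes A :: "real^'c^'r"
  assumes dom: "dominance_condition A" and "A$r1$c = 1" and "A$r2$c = 1"
  shows "r1 = r2"
proof (rule ccontr)
  assume "r1 \<noteq> r2"
  obtain g where "inj g" "\<And>i. A$i$(g i) = 1"
    using dominance_condition_obtains_unit_selection[OF dom] by blast
  then obtain h k where h: "inj h" "\<And>i. A$i$(h i) = 1" and "h k = c"
    using unit_selection_through_column \<open>A$r1$c = 1\<close> by blast
  obtain r where "r \<in> {r1, r2}" and "r \<noteq> k"
    using \<open>r1 \<noteq> r2\<close> by blast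
  then have "A$r$c = 1"
    using \<open>A$r1$c = 1\<close> \<open>A$r2$c = 1\<close> by blast
  have "A$r$(h r) + A$r$(h k) = (\<Sum>j\<in>{r, k}. A$r$(h j))"
    using \<open>r \<noteq> k\<close> by simp
  also have "\<dots> \<le> (\<Sum>j\<in>UNIV. A$r$(h j))"
    using dom by (intro sum_mono2) (auto simp: dominance_condition_def columnwise_normal_def)
  also have "\<dots> < 2"
    using dominance_condition_row_sum_less_2[OF dom h] .
  finally show False
    using h(2) \<open>A$r$c = 1\<close> \<open>h k = c\<close> by simp
qed

lemma dominance_condition_full_rank:
  fixes A :: "real^'c^'r"
  assumes dom: "dominance_condition A"
  shows "rank A = CARD('r)"
proof -
  obtain g where g: "inj g" "\<And>i. A$i$(g i) = 1"
    using dominance_condition_obtains_unit_selection[OF dom] by blast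
  have "(\<Sum>j\<in>UNIV-{i}. \<bar>col_submatrix A g $i$j\<bar>) < \<bar>col_submatrix A g $i$i\<bar>" for i
  proof -
    have "1 + (\<Sum>j\<in>UNIV-{i}. A$i$(g j)) < 2"
      using dominance_condition_row_sum_less_2[OF dom g, of i] g(2)
      by (simp add: sum.remove[of UNIV i])
    moreover have "\<bar>A$i$(g j)\<bar> = A$i$(g j)" for j
      using dom by (simp add: dominance_condition_def columnwise_normal_def)
    ultimately show ?thesis
      by (simp add: col_submatrix_def g(2))
  qed
  then have "rank (col_submatrix A g) = CARD('r)"
    by (rule strictly_diagonally_dominant_full_rank)
  then show ?thesis
    using rank_col_submatrix_le[of A g] rank_bound[of A] by linarith
qed

theorem lemma4p6:
  fixes A :: "real^'c^'r"
  assumes "dominance_condition A"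
  shows "rank A = CARD('r) \<and> (\<forall>j. \<exists>!i. A$i$j = 1)"
proof
  show "rank A = CARD('r)"
    using dominance_condition_full_rank[OF assms] .
  have "\<exists>i. A$i$j = 1" for j
    using assms unfolding dominance_condition_def columnwise_normal_def by blast
  then show "\<forall>j. \<exists>!i. A$i$j = 1"
    using dominance_condition_unique_one[OF assms] by blast
qed

end
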